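(* Fix $D\ge 1$, $\lambda>0$, and vectors $\mathbf{v}_1,\dots,\mathbf{v}_D\in\mathbb{R}^D$ such that, with $\mathbf{v}_{D+1}:=\mathbf{0}$, $\|\mathbf{v}_d-\mathbf{v}_{d'}\|_2=\lambda$ for all $d\neq d'$ in $\{1,\dots,D+1\}$. For a current state $\boldsymbol{\theta}\in\mathbb{R}^D$, let the multiproposal $q(\boldsymbol{\theta},\cdot)$ be the distribution of the configuration $$(\boldsymbol{\theta}^*_1,\dots,\boldsymbol{\theta}^*_{D+1}) := \mathbf{Q}(\mathbf{v}_1,\dots,\mathbf{v}_D,\mathbf{0})+\boldsymbol{\theta},\qquad \mathbf{Q}\sim\mathcal{H}(\mathcal{O}_D),$$ where $\mathcal{H}(\mathcal{O}_D)$ is the uniform (Haar) probability distribution on the orthogonal group $\mathcal{O}_D$ and adding $\boldsymbol{\theta}$ means adding it to each column (so $\boldsymbol{\theta}^*_{D+1}=\boldsymbol{\theta}$). Then for any configuration $\boldsymbol{\Theta}^*=(\boldsymbol{\theta}^*_1,\dots,\boldsymbol{\theta}^*_{D+1})$ so generated, the multiproposal satisfies the symmetry relation $$q(\boldsymbol{\theta}^*_1,\boldsymbol{\Theta}^* )=\dots=q(\boldsymbol{\theta}^*_d,\boldsymbol{\Theta}^* )=\dots=q(\boldsymbol{\theta}^*_{D+1},\boldsymbol{\Theta}^* ),$$ i.e. the configuration (as a set of $D+1$ points) is equally likely to be generated starting from any one of its points as the current state.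
   Context: $q(\boldsymbol{\theta},\boldsymbol{\Theta}^* )$ denotes the probability (density) that the proposal mechanism, started at current state $\boldsymbol{\theta}$, produces the set of proposals $\boldsymbol{\Theta}^*$, which always contains $\boldsymbol{\theta}$ itself. *)

theory Defs
  imports "HOL-Analysis.Analysis" "HOL-Probability.Probability"
begin

text \<open>Haar (uniform) probability distribution on the orthogonal group O_D, D = CARD('n):
  a Borel probability measure on D x D real matrices, concentrated on the orthogonal
  matrices and invariant under left and right multiplication by orthogonal matrices
  (these properties characterise the Haar measure uniquely).\<close>
definition haar_orthogonal :: "(real^'n^'n) measure \<Rightarrow> bool" where
  "haar_orthogonal H \<longleftrightarrow>
     prob_space H \<and> sets H = sets borel \<and>
     (AE Q in H. orthogonal_matrix Q) \<and>
     (\<forall>P. orthogonal_matrix P \<longrightarrow> distr H borel (\<lambda>Q. P ** Q) = H) \<and>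
     (\<forall>P. orthogonal_matrix P \<longrightarrow> distr H borel (\<lambda>Q. Q ** P) = H)"

text \<open>The D+1 simplex vertices indexed by 'n option: Some i is v_i, None is v_{D+1} = 0.\<close>
definition ext_vertices :: "('n \<Rightarrow> real^'n) \<Rightarrow> 'n option \<Rightarrow> real^'n" where
  "ext_vertices v o' = (case o' of None \<Rightarrow> 0 | Some i \<Rightarrow> v i)"

definition config :: "('n \<Rightarrow> real^'n) \<Rightarrow> real^'n^'n \<Rightarrow> real^'n \<Rightarrow> real^'n^('n option)" where
  "config v Q \<theta> = (\<chi> o'. Q *v ext_vertices v o' + \<theta>)"

definition multiproposal ::
  "(real^'n^'n) measure \<Rightarrow> ('n \<Rightarrow> real^'n) \<Rightarrow> real^'n \<Rightarrow> (real^'n^('n option)) measure" where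
  "multiproposal H v \<theta> = distr H borel (\<lambda>Q. config v Q \<theta>)"

text \<open>A function of a configuration that depends only on the unordered set of points.\<close>
definition perm_invariant :: "(real^'n^('n option) \<Rightarrow> 'b) \<Rightarrow> bool" where
  "perm_invariant g \<longleftrightarrow> (\<forall>\<sigma> X. \<sigma> permutes UNIV \<longrightarrow> g (\<chi> o'. X $ (\<sigma> o')) = g X)"

end

theory Submission
  imports Defs
begin

text \<open>Let w be the vertex with label k (w = 0 if k is the apex v_{D+1}).
  The reflection S in the hyperplane orthogonal to w fixes 0, sends w to -w, and sends every
  other vertex u to u - w, because |u - w| = |u| forces 2 u\<bullet>w = w\<bullet>w. So S maps the simplex
  onto its translate by -w, exchanging the labels of w and 0. Consequently the configuration
  generated with rotation Q S from its k-th point \<theta> + Q w is the configuration generated with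
  Q from \<theta>, relabelled. Since Q \<mapsto> Q S preserves Haar measure and \<theta> \<mapsto> \<theta> + Q w preserves
  Lebesgue measure, both sides are the same double integral.\<close>

definition hyperplane_reflection :: "'a::real_inner \<Rightarrow> 'a \<Rightarrow> 'a" where
  "hyperplane_reflection w u = u - (2 * (u \<bullet> w) / (w \<bullet> w)) *\<^sub>R w"

lemma linear_hyperplane_reflection: "linear (hyperplane_reflection w)"
  unfolding hyperplane_reflection_def linear_iff
  by (auto simp: algebra_simps add_divide_distrib)

lemma orthogonal_transformation_hyperplane_reflection:
  assumes "w \<noteq> 0"
  shows "orthogonal_transformation (hyperplane_reflection w)"
proof -
  have "hyperplane_reflection w a \<bullet> hyperplane_reflection w b = a \<bullet> b" for a b
    using assms unfolding hyperplane_reflection_def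
    by (simp add: inner_diff_left inner_diff_right inner_commute field_simps)
  then show ?thesis
    by (simp add: orthogonal_transformation_def linear_hyperplane_reflection)
qed

lemma hyperplane_reflection_self:
  "w \<noteq> 0 \<Longrightarrow> hyperplane_reflection w w = - w"
  by (simp add: hyperplane_reflection_def scaleR_2)

lemma hyperplane_reflection_zero: "hyperplane_reflection w 0 = 0"
  by (simp add: hyperplane_reflection_def)

lemma hyperplane_reflection_equidistant:
  assumes "norm (u - w) = norm u"
  shows "hyperplane_reflection w u = u - w"
proof (cases "w = 0")
  case False
  have "(u - w) \<bullet> (u - w) = u \<bullet> u"
    using assms by (simp flip: power2_norm_eq_inner)
  then have "2 * (u \<bullet> w) = w \<bullet> w"
    by (simp add: inner_diff_left inner_diff_right inner_commute)
  with False show ?thesis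
    by (simp add: hyperplane_reflection_def)
qed (simp add: hyperplane_reflection_def)

lemma orthogonal_matrix_hyperplane_reflection:
  fixes w :: "real^'n"
  assumes "w \<noteq> 0"
  shows "orthogonal_matrix (matrix (hyperplane_reflection w))"
  using orthogonal_transformation_hyperplane_reflection[OF assms]
  by (simp add: orthogonal_transformation_matrix)

lemma ext_vertices_orthogonal_relabelling:
  fixes v :: "'n::finite \<Rightarrow> real^'n"
  assumes dist: "\<And>a b. a \<noteq> b \<Longrightarrow> dist (ext_vertices v a) (ext_vertices v b) = lam"
    and "lam > 0"
  obtains S \<tau> where "orthogonal_matrix S" "\<tau> permutes UNIV"
    "\<And>a. S *v ext_vertices v (\<tau> a) = ext_vertices v a - ext_vertices v k"
proof (cases k)
  case None
  show ?thesis
    by (rule that[of "mat 1" id]) (auto simp: None ext_vertices_def orthogonal_matrix_id)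
next
  case (Some i)
  define w where "w = v i"
  define \<tau> where "\<tau> = Transposition.transpose (Some i) (None :: 'n option)"
  have "norm w = lam"
    using dist[of "Some i" None] by (simp add: ext_vertices_def w_def dist_norm)
  with \<open>lam > 0\<close> have "w \<noteq> 0" by auto
  have "hyperplane_reflection w (ext_vertices v (\<tau> a)) = ext_vertices v a - w" for a
  proof (cases a)
    case (Some j)
    show ?thesis
    proof (cases "j = i")
      case False
      have "norm (v j - w) = norm (v j)"
        using dist[of "Some j" "Some i"] dist[of "Some j" None] False
        by (simp add: ext_vertices_def w_def dist_norm)
      then show ?thesis
        using Some False by (simp add: \<tau>_def ext_vertices_def hyperplane_reflection_equidistant)
    qed (simp add: Some \<tau>_def ext_vertices_def w_def hyperplane_reflection_zero)
  qed (simp add: \<tau>_def ext_vertices_def flip: w_def, simp add: hyperplane_reflection_self \<open>w \<noteq> 0\<close>)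
  then show ?thesis
    using that[of "matrix (hyperplane_reflection w)" \<tau>] \<open>w \<noteq> 0\<close>
    by (simp add: Some w_def ext_vertices_def \<tau>_def permutes_swap_id
        orthogonal_matrix_hyperplane_reflection linear_hyperplane_reflection)
qed

lemma continuous_on_config [continuous_intros]:
  "continuous_on S g \<Longrightarrow> continuous_on S h \<Longrightarrow> continuous_on S (\<lambda>x. config v (g x) (h x))"
  unfolding config_def matrix_vector_mult_def by (intro continuous_intros)

lemma borel_measurable_continuous_pair_compose:
  fixes f :: "'a::second_countable_topology \<Rightarrow> 'b::second_countable_topology \<Rightarrow> 'c::topological_space"
  assumes f: "(\<lambda>(x, y). f x y) \<in> borel_measurable (borel \<Otimes>\<^sub>M borel)"
    and "continuous_on UNIV g" "continuous_on UNIV h"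
  shows "(\<lambda>z. f (g z) (h z)) \<in> borel_measurable borel"
proof -
  have "(\<lambda>z. (g z, h z)) \<in> borel_measurable borel"
    using assms(2,3) by (intro borel_measurable_continuous_onI continuous_intros)
  from measurable_compose[OF this f[unfolded borel_prod]] show ?thesis
    by simp
qed

lemma nn_integral_lborel_translate:
  fixes c :: "'a::euclidean_space"
  assumes "f \<in> borel_measurable borel"
  shows "(\<integral>\<^sup>+x. f (x + c) \<partial>lborel) = (\<integral>\<^sup>+x. f x \<partial>lborel)"
proof -
  have "(\<integral>\<^sup>+x. f x \<partial>lborel) = (\<integral>\<^sup>+x. f x \<partial>distr lborel borel ((+) c))"
    by (simp add: lborel_distr_plus)
  also have "\<dots> = (\<integral>\<^sup>+x. f (c + x) \<partial>lborel)"
    using assms by (intro nn_integral_distr) auto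
  finally show ?thesis
    by (simp add: add.commute)
qed

lemma nn_integral_lborel_skew_invariant:
  fixes F :: "'a::euclidean_space \<Rightarrow> 'b \<Rightarrow> ennreal"
  assumes "sigma_finite_measure H"
    and F: "(\<lambda>(x, y). F x y) \<in> borel_measurable (lborel \<Otimes>\<^sub>M H)"
    and t: "t \<in> H \<rightarrow>\<^sub>M borel"
    and \<phi>: "\<phi> \<in> H \<rightarrow>\<^sub>M H" "distr H H \<phi> = H"
  shows "(\<integral>\<^sup>+x. (\<integral>\<^sup>+y. F (x + t y) (\<phi> y) \<partial>H) \<partial>lborel) = (\<integral>\<^sup>+x. (\<integral>\<^sup>+y. F x y \<partial>H) \<partial>lborel)"
proof -
  interpret pair_sigma_finite lborel H
    using assms(1) by (intro pair_sigma_finite.intro sigma_finite_lborel)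
  define \<Phi> where "\<Phi> y = (\<integral>\<^sup>+x. F x y \<partial>lborel)" for y
  have F_swap: "(\<lambda>(y, x). F x y) \<in> borel_measurable (H \<Otimes>\<^sub>M lborel)"
    using F measurable_pair_swap_iff[of "\<lambda>(x, y). F x y"] by (simp add: case_prod_beta')
  have "(\<lambda>(x, y). F (x + t y) (\<phi> y)) \<in> borel_measurable (lborel \<Otimes>\<^sub>M H)"
    using F t \<phi>(1) by measurable
  then have "(\<integral>\<^sup>+x. (\<integral>\<^sup>+y. F (x + t y) (\<phi> y) \<partial>H) \<partial>lborel)
      = (\<integral>\<^sup>+y. (\<integral>\<^sup>+x. F (x + t y) (\<phi> y) \<partial>lborel) \<partial>H)"
    by (rule Fubini'[symmetric])
  also have "\<dots> = (\<integral>\<^sup>+y. \<Phi> (\<phi> y) \<partial>H)"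
  proof (rule nn_integral_cong)
    fix y assume "y \<in> space H"
    then have "\<phi> y \<in> space H"
      by (rule measurable_space[OF \<phi>(1)])
    from measurable_Pair1[OF F this] have "(\<lambda>x. F x (\<phi> y)) \<in> borel_measurable borel"
      by simp
    from nn_integral_lborel_translate[OF this, of "t y"]
    show "(\<integral>\<^sup>+x. F (x + t y) (\<phi> y) \<partial>lborel) = \<Phi> (\<phi> y)"
      by (simp add: \<Phi>_def)
  qed
  also have "\<dots> = (\<integral>\<^sup>+y. \<Phi> y \<partial>H)"
    using F_swap \<phi> unfolding \<Phi>_def
    by (subst (2) \<phi>(2)[symmetric], subst nn_integral_distr) (auto intro: lborel.borel_measurable_nn_integral)
  also have "\<dots> = (\<integral>\<^sup>+x. (\<integral>\<^sup>+y. F x y \<partial>H) \<partial>lborel)"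
    unfolding \<Phi>_def using F by (rule Fubini')
  finally show ?thesis .
qed

lemma nn_integral_multiproposal:
  assumes "sets H = sets borel" "g \<in> borel_measurable borel"
  shows "(\<integral>\<^sup>+X. g X \<partial>multiproposal H v \<theta>) = (\<integral>\<^sup>+Q. g (config v Q \<theta>) \<partial>H)"
  unfolding multiproposal_def
proof (rule nn_integral_distr)
  show "(\<lambda>Q. config v Q \<theta>) \<in> borel_measurable H"
    unfolding measurable_cong_sets[OF assms(1) refl]
    by (intro borel_measurable_continuous_onI continuous_intros)
qed (simp add: assms(2))

lemma config_relabel:
  assumes "\<And>a. S *v ext_vertices v (\<tau> a) = ext_vertices v a - w"
  shows "(\<chi> a. config v (Q ** S) (\<theta> + Q *v w) $ \<tau> a) = config v Q \<theta>"
proof -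
  have "(Q ** S) *v ext_vertices v (\<tau> a) + Q *v w = Q *v ext_vertices v a" for a
    using assms[of a]
    by (simp flip: matrix_vector_mul_assoc matrix_vector_right_distrib)
  then show ?thesis
    by (simp add: config_def vec_eq_iff algebra_simps)
qed

lemma perm_invariant_config_relabel:
  assumes "perm_invariant g" "\<tau> permutes UNIV"
    and "\<And>a. S *v ext_vertices v (\<tau> a) = ext_vertices v a - w"
  shows "g (config v (Q ** S) (\<theta> + Q *v w)) = g (config v Q \<theta>)"
  using assms config_relabel[OF assms(3)] unfolding perm_invariant_def by metis

lemma borel_measurable_config_integrand:
  fixes v :: "'n::finite \<Rightarrow> real^'n"
  assumes "sets H = sets borel" "(\<lambda>(\<theta>, X). f \<theta> X) \<in> borel_measurable (borel \<Otimes>\<^sub>M borel)"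
  shows "(\<lambda>(\<theta>, Q). f \<theta> (config v Q \<theta>)) \<in> borel_measurable (lborel \<Otimes>\<^sub>M H)"
proof -
  have sets_pair: "sets (lborel \<Otimes>\<^sub>M H) = sets (borel :: ((real^'n) \<times> (real^'n^'n)) measure)"
    by (simp add: assms(1) borel_prod[symmetric] cong: sets_pair_measure_cong)
  show ?thesis
    unfolding measurable_cong_sets[OF sets_pair refl] case_prod_beta'
    using assms(2) by (rule borel_measurable_continuous_pair_compose) (intro continuous_intros)+
qed

lemma haar_orthogonal_right_multiplication:
  assumes "haar_orthogonal H" "orthogonal_matrix S"
  shows "(\<lambda>Q. Q ** S) \<in> H \<rightarrow>\<^sub>M H" "distr H H (\<lambda>Q. Q ** S) = H"
proof -
  have sets_H: "sets H = sets borel"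
    using assms(1) by (simp add: haar_orthogonal_def)
  show "(\<lambda>Q. Q ** S) \<in> H \<rightarrow>\<^sub>M H"
    unfolding measurable_cong_sets[OF sets_H sets_H] matrix_matrix_mult_def
    by (intro borel_measurable_continuous_onI continuous_intros)
  have "distr H H (\<lambda>Q. Q ** S) = distr H borel (\<lambda>Q. Q ** S)"
    by (rule distr_cong) (simp_all add: sets_H)
  then show "distr H H (\<lambda>Q. Q ** S) = H"
    using assms unfolding haar_orthogonal_def by simp
qed

theorem lemma1:
  fixes v :: "'n::finite \<Rightarrow> real^'n" and lam :: real and H :: "(real^'n^'n) measure"
  assumes "lam > 0"
    and "\<And>a b. a \<noteq> b \<Longrightarrow> dist (ext_vertices v a) (ext_vertices v b) = lam"
    and "haar_orthogonal H"
    and "(\<lambda>(\<theta>, X). f \<theta> X) \<in> borel_measurable (borel \<Otimes>\<^sub>M borel)"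
    and "\<And>\<theta>. perm_invariant (f \<theta>)"
  shows "(\<integral>\<^sup>+ \<theta>. (\<integral>\<^sup>+ X. f \<theta> X \<partial>multiproposal H v \<theta>) \<partial>lborel)
       = (\<integral>\<^sup>+ \<theta>. (\<integral>\<^sup>+ X. f (X $ k) X \<partial>multiproposal H v \<theta>) \<partial>lborel)"
proof -
  have "prob_space H" and sets_H: "sets H = sets borel"
    using assms(3) unfolding haar_orthogonal_def by auto
  then interpret H: prob_space H by simp
  obtain S \<tau> where S: "orthogonal_matrix S" "\<tau> permutes UNIV"
    "\<And>a. S *v ext_vertices v (\<tau> a) = ext_vertices v a - ext_vertices v k"
    using ext_vertices_orthogonal_relabelling[OF assms(2,1)] by blast
  have shift: "(\<lambda>Q. Q *v ext_vertices v k) \<in> H \<rightarrow>\<^sub>M borel"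
    unfolding measurable_cong_sets[OF sets_H refl] matrix_vector_mult_def
    by (intro borel_measurable_continuous_onI continuous_intros)
  have "(\<integral>\<^sup>+ \<theta>. (\<integral>\<^sup>+ X. f \<theta> X \<partial>multiproposal H v \<theta>) \<partial>lborel)
      = (\<integral>\<^sup>+ \<theta>. (\<integral>\<^sup>+ Q. f \<theta> (config v Q \<theta>) \<partial>H) \<partial>lborel)"
    using borel_measurable_continuous_pair_compose[OF assms(4) continuous_on_const continuous_on_id]
    by (simp add: nn_integral_multiproposal[OF sets_H])
  also have "\<dots> = (\<integral>\<^sup>+ \<theta>. (\<integral>\<^sup>+ Q. f (\<theta> + Q *v ext_vertices v k)
                      (config v (Q ** S) (\<theta> + Q *v ext_vertices v k)) \<partial>H) \<partial>lborel)"
    by (rule nn_integral_lborel_skew_invariant[OF H.sigma_finite_measure_axioms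
          borel_measurable_config_integrand[OF sets_H assms(4)] shift
          haar_orthogonal_right_multiplication[OF assms(3) S(1)], symmetric])
  also have "\<dots> = (\<integral>\<^sup>+ \<theta>. (\<integral>\<^sup>+ Q. f (config v Q \<theta> $ k) (config v Q \<theta>) \<partial>H) \<partial>lborel)"
    by (simp add: perm_invariant_config_relabel[OF assms(5) S(2,3)])
       (simp add: config_def add.commute)
  also have "\<dots> = (\<integral>\<^sup>+ \<theta>. (\<integral>\<^sup>+ X. f (X $ k) X \<partial>multiproposal H v \<theta>) \<partial>lborel)"
    using borel_measurable_continuous_pair_compose[OF assms(4)
        continuous_on_component[OF continuous_on_id] continuous_on_id]
    by (simp add: nn_integral_multiproposal[OF sets_H])
  finally show ?thesis .
qed

end
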